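(* Let $\Lambda$ be a set and let $(\mathfrak{S},\lambda,\parallel,\Gamma,\gamma)$ be a composition-order invariant $\Lambda$-system algebra such that $\Gamma(s)\supseteq\{\{i,i'\}\mid i,i'\in\lambda(s),\ i\neq i'\}$ for all $s\in\mathfrak{S}$. Let $s_0,s_1,r_1,r_2\in\mathfrak{S}$ be such that $\lambda(s_0),\lambda(s_1),\lambda(r_1),\lambda(r_2)$ are pairwise disjoint, and let $s_0^1,s_0^2\in\lambda(s_0)$, $s_1^1,s_1^2\in\lambda(s_1)$, $r_1^1,r_1^2\in\lambda(r_1)$, $r_2^1,r_2^2\in\lambda(r_2)$ be eight distinct interface labels. Define $\mathcal{S}_0:=\{\gamma_{r_1^2,e^2}(\gamma_{s_0^2,e^1}(\gamma_{s_0^1,r_1^1}(s_0\parallel r_1\parallel e)))\mid e\in\mathfrak{S},\ \lambda(e)\cap\lambda(s_0)=\emptyset=\lambda(e)\cap\lambda(r_1),\ e^1,e^2\in\lambda(e),\ e^1\neq e^2\}$, $\mathcal{S}_1:=\{\gamma_{e^2,r_2^2}(\gamma_{s_1^2,r_2^1}(\gamma_{s_1^1,e^1}(s_1\parallel e\parallel r_2)))\mid e\in\mathfrak{S},\ \lambda(e)\cap\lambda(s_1)=\emptyset=\lambda(e)\cap\lambda(r_2),\ e^1,e^2\in\lambda(e),\ e^1\neq e^2\}$, $\mathcal{S}_{=}:=\{\gamma_{r_1^2,r_2^2}(\gamma_{e^2,r_2^1}(\gamma_{e^1,r_1^1}(e\parallel r_1\parallel r_2)))\mid e\in\mathfrak{S},\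 \lambda(e)\cap\lambda(r_1)=\emptyset=\lambda(e)\cap\lambda(r_2),\ e^1,e^2\in\lambda(e),\ e^1\neq e^2\}$. Then $\mathcal{S}_0\cap\mathcal{S}_1\cap\mathcal{S}_{=}\neq\emptyset$.
   Context: A $\Lambda$-system algebra $(\mathfrak{S},\lambda,\parallel,\Gamma,\gamma)$ consists of a set $\mathfrak{S}$ (systems), a function $\lambda:\mathfrak{S}\to\mathcal{P}(\Lambda)$ with $\lambda(s)$ finite for all $s$, a partial binary operation $\parallel$ on $\mathfrak{S}$, a function $\Gamma$ assigning to each system $s$ a set $\Gamma(s)$ of unordered pairs $\{i,i'\}$ with $i,i'\in\lambda(s)$, and a partial function $\gamma$ mapping a pair $\{i,i'\}$ and a system $s$ to a system $\gamma_{i,i'}(s)$, such that: $s_1\parallel s_2$ is defined iff $\lambda(s_1)\cap\lambda(s_2)=\emptyset$, in which case $\lambda(s_1\parallel s_2)=\lambda(s_1)\cup\lambda(s_2)$ and for $j\in\{1,2\}$ and $i,i'\in\lambda(s_j)$ one has $\{i,i'\}\in\Gamma(s_1\parallel s_2)\iff\{i,i'\}\in\Gamma(s_j)$; and $\gamma_{i,i'}(s)$ is defined iff $\{i,i'\}\in\Gamma(s)$, in which case $\lambda(\gamma_{i,i'}(s))=\lambda(s)\setminus\{i,i'\}$. $\Gamma$ permits reordering if for all $s$, $\{i,i'\}\in\Gamma(s)$ and $\{j,j'\}\in\Gamma(\gamma_{i,i'}(s))$ we have $\{j,j'\}\in\Gamma(s)$ and $\{i,i'\}\in\Gamma(\gamma_{j,j'}(s))$.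 The algebra is connection-order invariant if $\Gamma$ permits reordering and moreover $\gamma_{j,j'}(\gamma_{i,i'}(s))=\gamma_{i,i'}(\gamma_{j,j'}(s))$ in that situation. It is composition-order invariant if it is connection-order invariant, $\parallel$ is associative and commutative (so parentheses in multiple parallel compositions are irrelevant), and for all $s_1,s_2$ with $\lambda(s_1)\cap\lambda(s_2)=\emptyset$ and $\{i,i'\}\in\Gamma(s_1)$ we have $\gamma_{i,i'}(s_1)\parallel s_2=\gamma_{i,i'}(s_1\parallel s_2)$. *)

theory Defs
  imports Main
begin

text \<open>The partial
operations are modelled by total functions whose values are only constrained
(and only ever used) inside their domain of definition. Unordered pairs {i,i'}
are represented as sets of labels; gam p s stands for gamma_{i,i'}(s) with p = {i,i'}.\<close>

definition system_algebra ::
  "('s \<Rightarrow> 'l set) \<Rightarrow> ('s \<Rightarrow> 's \<Rightarrow> 's) \<Rightarrow> ('s \<Rightarrow> 'l set set) \<Rightarrow> ('l set \<Rightarrow> 's \<Rightarrow> 's) \<Rightarrow> bool"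
where
  "system_algebra lam par Gam gam \<longleftrightarrow>
     (\<forall>s. finite (lam s)) \<and>
     (\<forall>s. \<forall>p\<in>Gam s. \<exists>i i'. p = {i, i'} \<and> i \<in> lam s \<and> i' \<in> lam s) \<and>
     (\<forall>s1 s2. lam s1 \<inter> lam s2 = {} \<longrightarrow>
        lam (par s1 s2) = lam s1 \<union> lam s2 \<and>
        (\<forall>i i'. (i \<in> lam s1 \<and> i' \<in> lam s1 \<longrightarrow> ({i, i'} \<in> Gam (par s1 s2) \<longleftrightarrow> {i, i'} \<in> Gam s1)) \<and>
                (i \<in> lam s2 \<and> i' \<in> lam s2 \<longrightarrow> ({i, i'} \<in> Gam (par s1 s2) \<longleftrightarrow> {i, i'} \<in> Gam s2)))) \<and>
     (\<forall>s p. p \<in> Gam s \<longrightarrow> lam (gam p s) = lam s - p)"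

definition permits_reordering ::
  "('s \<Rightarrow> 'l set set) \<Rightarrow> ('l set \<Rightarrow> 's \<Rightarrow> 's) \<Rightarrow> bool"
where
  "permits_reordering Gam gam \<longleftrightarrow>
     (\<forall>s p q. p \<in> Gam s \<and> q \<in> Gam (gam p s) \<longrightarrow> q \<in> Gam s \<and> p \<in> Gam (gam q s))"

definition connection_order_invariant ::
  "('s \<Rightarrow> 'l set) \<Rightarrow> ('s \<Rightarrow> 's \<Rightarrow> 's) \<Rightarrow> ('s \<Rightarrow> 'l set set) \<Rightarrow> ('l set \<Rightarrow> 's \<Rightarrow> 's) \<Rightarrow> bool"
where
  "connection_order_invariant lam par Gam gam \<longleftrightarrow>
     system_algebra lam par Gam gam \<and> permits_reordering Gam gam \<and>
     (\<forall>s p q. p \<in> Gam s \<and> q \<in> Gam (gam p s) \<longrightarrow> gam q (gam p s) = gam p (gam q s))"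

text \<open>Associativity/commutativity of the partial operation par: equalities required
whenever (both sides are) defined, i.e. for pairwise disjoint label sets.\<close>

definition composition_order_invariant ::
  "('s \<Rightarrow> 'l set) \<Rightarrow> ('s \<Rightarrow> 's \<Rightarrow> 's) \<Rightarrow> ('s \<Rightarrow> 'l set set) \<Rightarrow> ('l set \<Rightarrow> 's \<Rightarrow> 's) \<Rightarrow> bool"
where
  "composition_order_invariant lam par Gam gam \<longleftrightarrow>
     connection_order_invariant lam par Gam gam \<and>
     (\<forall>a b c. lam a \<inter> lam b = {} \<and> lam a \<inter> lam c = {} \<and> lam b \<inter> lam c = {} \<longrightarrow>
        par (par a b) c = par a (par b c)) \<and>
     (\<forall>a b. lam a \<inter> lam b = {} \<longrightarrow> par a b = par b a) \<and>
     (\<forall>s1 s2 p. lam s1 \<inter> lam s2 = {} \<and> p \<in> Gam s1 \<longrightarrow>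
        par (gam p s1) s2 = gam p (par s1 s2))"

end

theory Submission
  imports Defs
begin

text \<open>Put s0, r1, s1, r2 in parallel and perform all four connections
{s01, r11}, {s02, s11}, {s12, r21}, {r12, r22}. Since connections commute with each
other and with parallel composition, the resulting closed system lies in each of the
three sets: take for e the system s1 \<parallel> r2 connected via {s12, r21} for the first set,
s0 \<parallel> r1 connected via {s01, r11} for the second, and s0 \<parallel> s1 connected via
{s02, s11} for the third.\<close>

locale coi_algebra =
  fixes lam :: "'s \<Rightarrow> 'l set" and par :: "'s \<Rightarrow> 's \<Rightarrow> 's"
    and Gam :: "'s \<Rightarrow> 'l set set" and gam :: "'l set \<Rightarrow> 's \<Rightarrow> 's"
  assumes coi: "composition_order_invariant lam par Gam gam"
begin

lemma system_algebra: "system_algebra lam par Gam gam"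
  using coi unfolding composition_order_invariant_def connection_order_invariant_def by simp

lemma lam_par:
  assumes "lam a \<inter> lam b = {}"
  shows "lam (par a b) = lam a \<union> lam b"
  using system_algebra assms unfolding system_algebra_def by simp

lemma lam_gam:
  assumes "p \<in> Gam s"
  shows "lam (gam p s) = lam s - p"
  using system_algebra assms unfolding system_algebra_def by simp

lemma par_commute:
  assumes "lam a \<inter> lam b = {}"
  shows "par a b = par b a"
  using coi assms unfolding composition_order_invariant_def by (elim conjE) blast

lemma par_assoc:
  assumes "lam a \<inter> lam b = {}" "lam a \<inter> lam c = {}" "lam b \<inter> lam c = {}"
  shows "par (par a b) c = par a (par b c)"
  using coi assms unfolding composition_order_invariant_def by simp

lemma par_gam_left:
  assumes "lam a \<inter> lam b = {}" "p \<in> Gam a"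
  shows "par (gam p a) b = gam p (par a b)"
  using coi assms unfolding composition_order_invariant_def by simp

lemma par_gam_right:
  assumes "lam a \<inter> lam b = {}" "p \<in> Gam b"
  shows "par a (gam p b) = gam p (par a b)"
proof -
  have "lam (gam p b) \<inter> lam a = {}"
    using assms by (auto simp: lam_gam)
  then have "par a (gam p b) = par (gam p b) a"
    by (simp add: par_commute inf_commute)
  also have "\<dots> = gam p (par b a)"
    using assms by (simp add: par_gam_left inf_commute)
  also have "\<dots> = gam p (par a b)"
    using par_commute[OF assms(1)] by simp
  finally show ?thesis .
qed

lemma gam_commute:
  assumes "p \<in> Gam s" "q \<in> Gam (gam p s)"
  shows "gam q (gam p s) = gam p (gam q s)"
  using coi assms unfolding composition_order_invariant_def connection_order_invariant_def
  by simp

end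

locale full_coi_algebra = coi_algebra +
  assumes Gam_full: "\<And>s i i'. i \<in> lam s \<Longrightarrow> i' \<in> lam s \<Longrightarrow> i \<noteq> i' \<Longrightarrow> {i, i'} \<in> Gam s"
begin

lemma lam_gam_pair:
  assumes "i \<in> lam s" "i' \<in> lam s" "i \<noteq> i'"
  shows "lam (gam {i, i'} s) = lam s - {i, i'}"
  using assms by (simp add: Gam_full lam_gam)

lemma gam_pair_commute:
  assumes "i \<in> lam s" "i' \<in> lam s" "i \<noteq> i'" "j \<in> lam s" "j' \<in> lam s" "j \<noteq> j'"
    and "{i, i'} \<inter> {j, j'} = {}"
  shows "gam {j, j'} (gam {i, i'} s) = gam {i, i'} (gam {j, j'} s)"
proof (rule gam_commute)
  show "{i, i'} \<in> Gam s" using assms by (simp add: Gam_full)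
  show "{j, j'} \<in> Gam (gam {i, i'} s)"
    using assms by (intro Gam_full) (auto simp: lam_gam_pair)
qed

end

locale four_systems = full_coi_algebra +
  fixes s0 s1 r1 r2 :: 's
    and s01 s02 s11 s12 r11 r12 r21 r22 :: 'l
  assumes disj: "lam s0 \<inter> lam s1 = {}" "lam s0 \<inter> lam r1 = {}" "lam s0 \<inter> lam r2 = {}"
                "lam s1 \<inter> lam r1 = {}" "lam s1 \<inter> lam r2 = {}" "lam r1 \<inter> lam r2 = {}"
    and lbl: "s01 \<in> lam s0" "s02 \<in> lam s0" "s11 \<in> lam s1" "s12 \<in> lam s1"
             "r11 \<in> lam r1" "r12 \<in> lam r1" "r21 \<in> lam r2" "r22 \<in> lam r2"
    and dist: "distinct [s01, s02, s11, s12, r11, r12, r21, r22]"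
begin

definition all_parallel :: 's where
  "all_parallel = par (par s0 r1) (par s1 r2)"

definition all_connected :: 's where
  "all_connected = gam {r12, r22} (gam {s02, s11} (gam {s01, r11} (gam {s12, r21} all_parallel)))"

lemma lam_all_parallel: "lam all_parallel = lam s0 \<union> lam r1 \<union> lam s1 \<union> lam r2"
proof -
  have "lam (par s0 r1) \<inter> lam (par s1 r2) = {}"
    using disj by (auto simp: lam_par)
  then show ?thesis
    using disj by (auto simp: all_parallel_def lam_par)
qed

lemma all_parallel_as_s1_s0_r1_r2: "par (par s1 (par s0 r1)) r2 = all_parallel"
proof -
  have lam_s0r1: "lam (par s0 r1) = lam s0 \<union> lam r1"
    using disj by (simp add: lam_par)
  have "par s1 (par s0 r1) = par (par s0 r1) s1"
    using disj lam_s0r1 by (intro par_commute) auto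
  moreover have "par (par (par s0 r1) s1) r2 = all_parallel"
    unfolding all_parallel_def using disj lam_s0r1 by (intro par_assoc) auto
  ultimately show ?thesis by simp
qed

lemma all_parallel_as_s0_s1_r1_r2: "par (par (par s0 s1) r1) r2 = all_parallel"
proof -
  have "par (par s0 s1) r1 = par s0 (par s1 r1)"
    using disj by (intro par_assoc) auto
  also have "\<dots> = par s0 (par r1 s1)"
    using disj by (simp add: par_commute)
  also have "\<dots> = par (par s0 r1) s1"
    using disj by (intro par_assoc[symmetric]) auto
  also have "\<dots> = par s1 (par s0 r1)"
    using disj by (intro par_commute) (auto simp: lam_par)
  finally show ?thesis
    using all_parallel_as_s1_s0_r1_r2 by simp
qed

lemma all_connected_in_first:
  "all_connected \<in> {gam {r12, e2} (gam {s02, e1} (gam {s01, r11} (par (par s0 r1) e))) | e e1 e2.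
            lam e \<inter> lam s0 = {} \<and> lam e \<inter> lam r1 = {} \<and> e1 \<in> lam e \<and> e2 \<in> lam e \<and> e1 \<noteq> e2}"
proof -
  define e where "e = gam {s12, r21} (par s1 r2)"
  have lam_e: "lam e = lam s1 \<union> lam r2 - {s12, r21}"
    unfolding e_def using disj lbl dist by (simp add: lam_gam_pair lam_par)
  have "par (par s0 r1) e = gam {s12, r21} all_parallel"
    unfolding e_def all_parallel_def using disj lbl dist
    by (intro par_gam_right Gam_full) (auto simp: lam_par)
  then have "all_connected = gam {r12, r22} (gam {s02, s11} (gam {s01, r11} (par (par s0 r1) e)))"
    by (simp add: all_connected_def)
  moreover have "lam e \<inter> lam s0 = {} \<and> lam e \<inter> lam r1 = {} \<and> s11 \<in> lam e \<and> r22 \<in> lam e \<and> s11 \<noteq> r22"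
    using lam_e disj lbl dist by auto
  ultimately show ?thesis by blast
qed

lemma all_connected_in_second:
  "all_connected \<in> {gam {e2, r22} (gam {s12, r21} (gam {s11, e1} (par (par s1 e) r2))) | e e1 e2.
            lam e \<inter> lam s1 = {} \<and> lam e \<inter> lam r2 = {} \<and> e1 \<in> lam e \<and> e2 \<in> lam e \<and> e1 \<noteq> e2}"
proof -
  define e where "e = gam {s01, r11} (par s0 r1)"
  have lam_s0r1: "lam (par s0 r1) = lam s0 \<union> lam r1"
    using disj by (simp add: lam_par)
  have lam_e: "lam e = lam s0 \<union> lam r1 - {s01, r11}"
    unfolding e_def using lam_s0r1 lbl dist by (simp add: lam_gam_pair)
  have "par s1 e = gam {s01, r11} (par s1 (par s0 r1))"
    unfolding e_def using disj lam_s0r1 lbl dist by (intro par_gam_right Gam_full) auto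
  moreover have "par (gam {s01, r11} (par s1 (par s0 r1))) r2 = gam {s01, r11} all_parallel"
  proof -
    have "lam (par s1 (par s0 r1)) = lam s1 \<union> (lam s0 \<union> lam r1)"
      using disj lam_s0r1 by (subst lam_par) auto
    then show ?thesis
      unfolding all_parallel_as_s1_s0_r1_r2[symmetric] using disj lam_s0r1 lbl dist
      by (intro par_gam_left Gam_full) auto
  qed
  ultimately have connected: "par (par s1 e) r2 = gam {s01, r11} all_parallel"
    by simp
  have "gam {s12, r21} (gam {s02, s11} (gam {s01, r11} all_parallel))
      = gam {s02, s11} (gam {s12, r21} (gam {s01, r11} all_parallel))"
    using lam_all_parallel lbl dist by (intro gam_pair_commute) (auto simp: lam_gam_pair)
  also have "gam {s12, r21} (gam {s01, r11} all_parallel) = gam {s01, r11} (gam {s12, r21} all_parallel)"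
    using lam_all_parallel lbl dist by (intro gam_pair_commute) auto
  finally have "all_connected = gam {r12, r22} (gam {s12, r21} (gam {s11, s02} (par (par s1 e) r2)))"
    by (simp add: all_connected_def connected insert_commute)
  moreover have "lam e \<inter> lam s1 = {} \<and> lam e \<inter> lam r2 = {} \<and> s02 \<in> lam e \<and> r12 \<in> lam e \<and> s02 \<noteq> r12"
    using lam_e disj lbl dist by auto
  ultimately show ?thesis by blast
qed

lemma all_connected_in_third:
  "all_connected \<in> {gam {r12, r22} (gam {e2, r21} (gam {e1, r11} (par (par e r1) r2))) | e e1 e2.
            lam e \<inter> lam r1 = {} \<and> lam e \<inter> lam r2 = {} \<and> e1 \<in> lam e \<and> e2 \<in> lam e \<and> e1 \<noteq> e2}"
proof -
  define e where "e = gam {s02, s11} (par s0 s1)"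
  have lam_s0s1: "lam (par s0 s1) = lam s0 \<union> lam s1"
    using disj by (simp add: lam_par)
  have lam_e: "lam e = lam s0 \<union> lam s1 - {s02, s11}"
    unfolding e_def using lam_s0s1 lbl dist by (simp add: lam_gam_pair)
  have "par e r1 = gam {s02, s11} (par (par s0 s1) r1)"
    unfolding e_def using disj lam_s0s1 lbl dist by (intro par_gam_left Gam_full) auto
  moreover have "par (gam {s02, s11} (par (par s0 s1) r1)) r2 = gam {s02, s11} all_parallel"
  proof -
    have "lam (par (par s0 s1) r1) = lam s0 \<union> lam s1 \<union> lam r1"
      using disj lam_s0s1 by (subst lam_par) auto
    then show ?thesis
      unfolding all_parallel_as_s0_s1_r1_r2[symmetric] using disj lam_s0s1 lbl dist
      by (intro par_gam_left Gam_full) auto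
  qed
  ultimately have connected: "par (par e r1) r2 = gam {s02, s11} all_parallel"
    by simp
  have "gam {s12, r21} (gam {s01, r11} (gam {s02, s11} all_parallel))
      = gam {s02, s11} (gam {s12, r21} (gam {s01, r11} all_parallel))"
  proof -
    have "gam {s01, r11} (gam {s02, s11} all_parallel) = gam {s02, s11} (gam {s01, r11} all_parallel)"
      using lam_all_parallel lbl dist by (intro gam_pair_commute) auto
    moreover have "gam {s12, r21} (gam {s02, s11} (gam {s01, r11} all_parallel))
        = gam {s02, s11} (gam {s12, r21} (gam {s01, r11} all_parallel))"
      using lam_all_parallel lbl dist by (intro gam_pair_commute) (auto simp: lam_gam_pair)
    ultimately show ?thesis by simp
  qed
  also have "gam {s12, r21} (gam {s01, r11} all_parallel) = gam {s01, r11} (gam {s12, r21} all_parallel)"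
    using lam_all_parallel lbl dist by (intro gam_pair_commute) auto
  finally have "all_connected = gam {r12, r22} (gam {s12, r21} (gam {s01, r11} (par (par e r1) r2)))"
    by (simp add: all_connected_def connected)
  moreover have "lam e \<inter> lam r1 = {} \<and> lam e \<inter> lam r2 = {} \<and> s01 \<in> lam e \<and> s12 \<in> lam e \<and> s01 \<noteq> s12"
    using lam_e disj lbl dist by auto
  ultimately show ?thesis by blast
qed

end

theorem theorem3p3:
  fixes lam :: "'s \<Rightarrow> 'l set" and par :: "'s \<Rightarrow> 's \<Rightarrow> 's"
    and Gam :: "'s \<Rightarrow> 'l set set" and gam :: "'l set \<Rightarrow> 's \<Rightarrow> 's"
    and s0 s1 r1 r2 :: 's
    and s01 s02 s11 s12 r11 r12 r21 r22 :: 'l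
  assumes alg: "composition_order_invariant lam par Gam gam"
    and full: "\<And>s. {{i, i'} | i i'. i \<in> lam s \<and> i' \<in> lam s \<and> i \<noteq> i'} \<subseteq> Gam s"
    and disj: "lam s0 \<inter> lam s1 = {}" "lam s0 \<inter> lam r1 = {}" "lam s0 \<inter> lam r2 = {}"
              "lam s1 \<inter> lam r1 = {}" "lam s1 \<inter> lam r2 = {}" "lam r1 \<inter> lam r2 = {}"
    and lbl: "s01 \<in> lam s0" "s02 \<in> lam s0" "s11 \<in> lam s1" "s12 \<in> lam s1"
             "r11 \<in> lam r1" "r12 \<in> lam r1" "r21 \<in> lam r2" "r22 \<in> lam r2"
    and dist: "distinct [s01, s02, s11, s12, r11, r12, r21, r22]"
  shows "{gam {r12, e2} (gam {s02, e1} (gam {s01, r11} (par (par s0 r1) e))) | e e1 e2.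
            lam e \<inter> lam s0 = {} \<and> lam e \<inter> lam r1 = {} \<and> e1 \<in> lam e \<and> e2 \<in> lam e \<and> e1 \<noteq> e2}
       \<inter> {gam {e2, r22} (gam {s12, r21} (gam {s11, e1} (par (par s1 e) r2))) | e e1 e2.
            lam e \<inter> lam s1 = {} \<and> lam e \<inter> lam r2 = {} \<and> e1 \<in> lam e \<and> e2 \<in> lam e \<and> e1 \<noteq> e2}
       \<inter> {gam {r12, r22} (gam {e2, r21} (gam {e1, r11} (par (par e r1) r2))) | e e1 e2.
            lam e \<inter> lam r1 = {} \<and> lam e \<inter> lam r2 = {} \<and> e1 \<in> lam e \<and> e2 \<in> lam e \<and> e1 \<noteq> e2}
       \<noteq> {}"
proof -
  interpret four_systems lam par Gam gam s0 s1 r1 r2 s01 s02 s11 s12 r11 r12 r21 r22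
  proof
    show "\<And>s i i'. i \<in> lam s \<Longrightarrow> i' \<in> lam s \<Longrightarrow> i \<noteq> i' \<Longrightarrow> {i, i'} \<in> Gam s"
      using full by blast
  qed (use alg disj lbl dist in auto)
  show ?thesis
    using IntI[OF IntI[OF all_connected_in_first all_connected_in_second] all_connected_in_third]
    by (rule ex_in_conv[THEN iffD1, OF exI])
qed

end
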